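(* Let $m\geq 1$ and let $f=a_0+a_1z+\cdots+a_mz^m\in\mathbb{Z}[z]$ with $a_m\neq 0$. Suppose there exist a prime $p$ and coprime positive integers $k$ and $j$ with $1\leq j\leq m$ such that $p\nmid a_j$, $p^k\mid a_i$ for all $i=0,\ldots,j-1$, and $p^{k+1}\nmid a_0$. Then for every factorization $f=gh$ with $g,h\in\mathbb{Z}[z]$ one has $\min\{\deg g,\deg h\}\leq m-j$ (more precisely, one of $g,h$ has degree $0$ or degree at most $m-j$). In particular, if $f$ is primitive and $j=m$, then $f$ is irreducible in $\mathbb{Z}[z]$; and if $f$ is primitive, $j=m-1$, and $f$ has no root in $\mathbb{Q}$, then $f$ is irreducible in $\mathbb{Z}[z]$.
   Context: A polynomial in $\mathbb{Z}[z]$ is primitive if the greatest common divisor of its coefficients is $1$. *)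

theory Defs
  imports "HOL-Computational_Algebra.Computational_Algebra"
begin

end

theory Submission
  imports Defs
begin

text \<open>
  Weight the coefficient c_i of a polynomial by j v_p(c_i) + k i, i.e. measure the points of its
  Newton diagram by a linear form that is constant along lines of slope -k/j. If t_g and t_h are
  the last indices of minimal weight in g and h, every other product in a coefficient of gh of
  index at least t_g + t_h has strictly larger weight than the product at (t_g, t_h); so the
  coefficient t_g + t_h of gh has exactly the sum of the two minimal weights. For f = gh the
  hypotheses say that the minimal weight jk of f is attained at 0 and at j. Hence g and h attain
  their minimal weights at 0, so j divides k t_g and, by coprimality, t_g; likewise t_h. As
  t_g = t_h = 0 would force p to divide a_j, one factor has degree at least j.
\<close>

definition newton_weight :: "'a::factorial_semiring \<Rightarrow> nat \<Rightarrow> nat \<Rightarrow> 'a poly \<Rightarrow> nat \<Rightarrow> nat" where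
  "newton_weight p a b g i = a * multiplicity p (coeff g i) + b * i"

definition is_last_min_weight :: "'a::zero poly \<Rightarrow> (nat \<Rightarrow> nat) \<Rightarrow> nat \<Rightarrow> bool" where
  "is_last_min_weight g w t \<longleftrightarrow> coeff g t \<noteq> 0 \<and> (\<forall>i. coeff g i \<noteq> 0 \<longrightarrow> w t \<le> w i)
     \<and> (\<forall>i>t. coeff g i \<noteq> 0 \<longrightarrow> w t < w i)"

lemma is_last_min_weight_exists:
  fixes g :: "'a::zero poly"
  assumes "g \<noteq> 0"
  obtains t where "is_last_min_weight g w t"
proof -
  define S where "S = {i. coeff g i \<noteq> 0}"
  have "finite S"
    unfolding S_def by (rule finite_subset[of _ "{..degree g}"]) (auto intro: le_degree)
  moreover have "degree g \<in> S"
    using assms by (simp add: S_def)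
  ultimately have min: "Min (w ` S) \<in> w ` S" "\<And>i. i \<in> S \<Longrightarrow> Min (w ` S) \<le> w i"
    by (auto intro: Min_in)
  define T where "T = {i \<in> S. w i = Min (w ` S)}"
  have "finite T" "T \<noteq> {}"
    using \<open>finite S\<close> min(1) by (auto simp: T_def)
  then have "Max T \<in> T" "\<And>i. i \<in> T \<Longrightarrow> i \<le> Max T"
    by auto
  then have "is_last_min_weight g w (Max T)"
    using min(2) unfolding is_last_min_weight_def T_def S_def
    by (metis (mono_tags, lifting) mem_Collect_eq nat_less_le not_le)
  then show thesis
    by (rule that)
qed

lemma is_last_min_weight_add_less:
  assumes "is_last_min_weight g wg tg" "is_last_min_weight h wh th"
    and "coeff g i \<noteq> 0" "coeff h l \<noteq> 0" "tg < i \<or> th < l"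
  shows "wg tg + wh th < wg i + wh l"
  using assms unfolding is_last_min_weight_def by (meson add_le_less_mono add_less_le_mono)

lemma newton_weight_mult:
  assumes "prime_elem p" "coeff g i \<noteq> 0" "coeff h l \<noteq> 0"
  shows "a * multiplicity p (coeff g i * coeff h l) + b * (i + l)
    = newton_weight p a b g i + newton_weight p a b h l"
  using assms by (simp add: newton_weight_def prime_elem_multiplicity_mult_distrib algebra_simps)

lemma coeff_mult_last_min_weight_not_dvd:
  fixes g h :: "'a::{factorial_semiring, idom} poly"
  assumes p: "prime_elem p" and "a > 0"
    and tg: "is_last_min_weight g (newton_weight p a b g) tg"
    and th: "is_last_min_weight h (newton_weight p a b h) th"
  shows "\<not> p ^ Suc (multiplicity p (coeff g tg) + multiplicity p (coeff h th))
    dvd coeff (g * h) (tg + th)"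
proof
  define V where "V = multiplicity p (coeff g tg) + multiplicity p (coeff h th)"
  define n where "n = tg + th"
  have tg0: "coeff g tg \<noteq> 0" and th0: "coeff h th \<noteq> 0"
    using tg th by (auto simp: is_last_min_weight_def)
  have main: "\<not> p ^ Suc V dvd coeff g tg * coeff h th"
  proof
    assume "p ^ Suc V dvd coeff g tg * coeff h th"
    then have "Suc V \<le> multiplicity p (coeff g tg * coeff h th)"
      using tg0 th0 p by (intro multiplicity_geI) auto
    then show False
      using p tg0 th0 by (simp add: V_def prime_elem_multiplicity_mult_distrib)
  qed
  have rest: "p ^ Suc V dvd (\<Sum>i\<in>{..n} - {tg}. coeff g i * coeff h (n - i))"
  proof (rule dvd_sum)
    fix i assume i: "i \<in> {..n} - {tg}"
    show "p ^ Suc V dvd coeff g i * coeff h (n - i)"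
    proof (cases "coeff g i = 0 \<or> coeff h (n - i) = 0")
      case False
      have "tg < i \<or> th < n - i"
        using i by (auto simp: n_def)
      then have "newton_weight p a b g tg + newton_weight p a b h th
          < newton_weight p a b g i + newton_weight p a b h (n - i)"
        using False by (intro is_last_min_weight_add_less[OF tg th]) auto
      moreover have "a * V + b * n = newton_weight p a b g tg + newton_weight p a b h th"
        using newton_weight_mult[OF p tg0 th0, of a b] p tg0 th0
        by (simp add: V_def n_def prime_elem_multiplicity_mult_distrib)
      moreover have "a * multiplicity p (coeff g i * coeff h (n - i)) + b * n
          = newton_weight p a b g i + newton_weight p a b h (n - i)"
        using newton_weight_mult[of p g i h "n - i" a b] False i p by simp
      ultimately have "a * V < a * multiplicity p (coeff g i * coeff h (n - i))"
        by linarith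
      then show ?thesis
        by (intro multiplicity_dvd') simp
    qed auto
  qed
  assume "p ^ Suc V dvd coeff (g * h) n"
  moreover have "coeff (g * h) n
      = coeff g tg * coeff h th + (\<Sum>i\<in>{..n} - {tg}. coeff g i * coeff h (n - i))"
    using sum.remove[of "{..n}" tg "\<lambda>i. coeff g i * coeff h (n - i)"]
    by (simp add: coeff_mult n_def)
  ultimately show False
    using main rest by (simp add: dvd_add_left_iff)
qed

lemma coeff_mult_beyond_last_min_weight_dvd:
  fixes g h :: "'a::factorial_semiring poly"
  assumes p: "prime_elem p"
    and tg: "is_last_min_weight g (newton_weight p a b g) tg"
    and th: "is_last_min_weight h (newton_weight p a b h) th"
    and "tg + th < n" and "b * n \<le> newton_weight p a b g tg + newton_weight p a b h th"
  shows "p dvd coeff (g * h) n"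
  unfolding coeff_mult
proof (rule dvd_sum)
  fix i assume i: "i \<in> {..n}"
  show "p dvd coeff g i * coeff h (n - i)"
  proof (cases "coeff g i = 0 \<or> coeff h (n - i) = 0")
    case False
    have "newton_weight p a b g tg + newton_weight p a b h th
        < newton_weight p a b g i + newton_weight p a b h (n - i)"
      using False assms(4) by (intro is_last_min_weight_add_less[OF tg th]) auto
    moreover have "a * multiplicity p (coeff g i * coeff h (n - i)) + b * n
        = newton_weight p a b g i + newton_weight p a b h (n - i)"
      using newton_weight_mult[of p g i h "n - i" a b] False i p by simp
    ultimately have "0 < a * multiplicity p (coeff g i * coeff h (n - i))"
      using assms(5) by linarith
    then have "p ^ 1 dvd coeff g i * coeff h (n - i)"
      by (intro multiplicity_dvd') simp
    then show ?thesis
      by simp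
  qed auto
qed

lemma newton_weight_last_min_sum_ge:
  fixes g h :: "'a::{factorial_semiring, idom} poly"
  assumes p: "prime_elem p" and "a > 0"
    and tg: "is_last_min_weight g (newton_weight p a b g) tg"
    and th: "is_last_min_weight h (newton_weight p a b h) th"
    and low: "\<forall>i<a. p ^ b dvd coeff (g * h) i"
  shows "a * b \<le> newton_weight p a b g tg + newton_weight p a b h th"
proof -
  define V where "V = multiplicity p (coeff g tg) + multiplicity p (coeff h th)"
  have "coeff g tg \<noteq> 0" "coeff h th \<noteq> 0"
    using tg th by (auto simp: is_last_min_weight_def)
  then have weight: "newton_weight p a b g tg + newton_weight p a b h th = a * V + b * (tg + th)"
    using p by (simp add: newton_weight_mult[symmetric] V_def prime_elem_multiplicity_mult_distrib)
  show ?thesis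
  proof (cases "a \<le> tg + th")
    case True
    then show ?thesis
      unfolding weight by (metis mult.commute mult_le_mono2 trans_le_add2)
  next
    case False
    have "p ^ b dvd coeff (g * h) (tg + th)"
      using low False by simp
    then have "\<not> p ^ Suc V dvd p ^ b"
      using coeff_mult_last_min_weight_not_dvd[OF p \<open>a > 0\<close> tg th] dvd_trans
      unfolding V_def by blast
    then have "b \<le> V"
      by (metis le_imp_power_dvd not_less_eq_eq)
    then show ?thesis
      unfolding weight by (simp add: trans_le_add1)
  qed
qed

lemma eisenstein_dumas_factor_degree_ge:
  fixes f g h :: "'a::{factorial_semiring, idom} poly"
  assumes fgh: "f = g * h" and p: "prime_elem p" and "coprime k j" and "1 \<le> j"
    and aj: "\<not> p dvd coeff f j"
    and low: "\<forall>i<j. p ^ k dvd coeff f i"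
    and a0: "\<not> p ^ (k + 1) dvd coeff f 0"
  shows "j \<le> degree g \<or> j \<le> degree h"
proof -
  have f0: "coeff f 0 = coeff g 0 * coeff h 0"
    by (simp add: fgh coeff_mult_0)
  then have g0: "coeff g 0 \<noteq> 0" and h0: "coeff h 0 \<noteq> 0"
    using a0 by auto
  obtain tg where tg: "is_last_min_weight g (newton_weight p j k g) tg"
    using is_last_min_weight_exists g0 by (metis coeff_0)
  obtain th where th: "is_last_min_weight h (newton_weight p j k h) th"
    using is_last_min_weight_exists h0 by (metis coeff_0)
  have "multiplicity p (coeff f 0) = k"
    using low a0 \<open>1 \<le> j\<close> by (intro multiplicity_eqI) auto
  then have weight_0: "newton_weight p j k g 0 + newton_weight p j k h 0 = j * k"
    using newton_weight_mult[OF p g0 h0, of j k] f0 by simp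
  moreover have "newton_weight p j k g tg \<le> newton_weight p j k g 0"
    "newton_weight p j k h th \<le> newton_weight p j k h 0"
    using tg th g0 h0 unfolding is_last_min_weight_def by blast+
  moreover have "j * k \<le> newton_weight p j k g tg + newton_weight p j k h th"
    using newton_weight_last_min_sum_ge[OF p _ tg th] low fgh \<open>1 \<le> j\<close> by simp
  ultimately have min_at_0: "newton_weight p j k g tg = newton_weight p j k g 0"
    "newton_weight p j k h th = newton_weight p j k h 0"
    by linarith+
  have j_dvd: "j dvd t" if "newton_weight p j k q t = newton_weight p j k q 0" for q t
  proof -
    have "k * t = j * (multiplicity p (coeff q 0) - multiplicity p (coeff q t))"
      using that by (simp add: newton_weight_def right_diff_distrib')
    then have "j dvd k * t"
      by simp
    then show ?thesis
      using \<open>coprime k j\<close> by (simp add: coprime_commute coprime_dvd_mult_right_iff)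
  qed
  show ?thesis
  proof (cases "j \<le> tg \<or> j \<le> th")
    case True
    then show ?thesis
      using tg th le_degree unfolding is_last_min_weight_def by (meson order_trans)
  next
    case False
    then have "tg = 0" "th = 0"
      using j_dvd[OF min_at_0(1)] j_dvd[OF min_at_0(2)] by (auto dest: dvd_imp_le)
    then have "p dvd coeff f j"
      using coeff_mult_beyond_last_min_weight_dvd[OF p tg th, of j] min_at_0 weight_0 \<open>1 \<le> j\<close>
      by (simp add: fgh mult.commute)
    with aj show ?thesis
      by contradiction
  qed
qed

lemma is_unit_if_degree_0_dvd_primitive:
  fixes f g :: "'a::factorial_ring_gcd poly"
  assumes "content f = 1" "degree g = 0" "g dvd f"
  shows "is_unit g"
proof -
  obtain c where "g = [:c:]"
    using assms(2) by (rule degree_eq_zeroE)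
  with assms show ?thesis
    by (simp add: const_poly_dvd_iff_dvd_content is_unit_const_poly_iff)
qed

lemma irreducible_primitiveI:
  fixes f :: "'a::factorial_ring_gcd poly"
  assumes "content f = 1" "degree f \<noteq> 0"
    and "\<And>g h. f = g * h \<Longrightarrow> degree g = 0 \<or> degree h = 0"
  shows "irreducible f"
proof (rule irreducibleI)
  show "f \<noteq> 0" "\<not> is_unit f"
    using assms(2) by (auto simp: is_unit_poly_iff)
  fix g h assume "f = g * h"
  then show "is_unit g \<or> is_unit h"
    using assms is_unit_if_degree_0_dvd_primitive by (metis dvd_triv_left dvd_triv_right)
qed

lemma map_poly_of_int_mult:
  "map_poly (of_int :: int \<Rightarrow> 'a::comm_ring_1) (p * q) = map_poly of_int p * map_poly of_int q"
  by (rule poly_eqI) (simp add: coeff_map_poly coeff_mult of_int_sum of_int_mult)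

lemma map_poly_of_int_degree_1_root:
  fixes g :: "int poly"
  assumes "degree g = 1"
  shows "poly (map_poly of_int g) (- of_int (coeff g 0) / of_int (coeff g 1) :: 'a::field_char_0) = 0"
proof -
  obtain a b where "g = [:b, a:]" "a \<noteq> 0"
    using assms by (rule degree1_coeffs)
  then show ?thesis
    by (simp add: map_poly_pCons field_simps)
qed

theorem theorem1:
  fixes f :: "int poly" and m j k :: nat and p :: int
  assumes "m \<ge> 1"
    and "degree f = m"
    and "coeff f m \<noteq> 0"
    and "prime p"
    and "k > 0" and "coprime k j"
    and "1 \<le> j" and "j \<le> m"
    and "\<not> p dvd coeff f j"
    and "\<forall>i<j. p ^ k dvd coeff f i"
    and "\<not> p ^ (k + 1) dvd coeff f 0"
  shows "(\<forall>g h :: int poly. f = g * h \<longrightarrow> min (degree g) (degree h) \<le> m - j)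
    \<and> (content f = 1 \<and> j = m \<longrightarrow> irreducible f)
    \<and> (content f = 1 \<and> j = m - 1 \<and> (\<forall>x::rat. poly (map_poly of_int f) x \<noteq> 0)
         \<longrightarrow> irreducible f)"
proof -
  have min_degree: "min (degree g) (degree h) \<le> m - j" if "f = g * h" for g h
  proof -
    have "degree g + degree h = m"
      using that assms(2,3) by (metis degree_mult_eq leading_coeff_0_iff mult_eq_0_iff)
    then show ?thesis
      using eisenstein_dumas_factor_degree_ge[OF that prime_imp_prime_elem[OF assms(4)] assms(6,7,9-11)]
      by linarith
  qed
  have no_linear_factor: "degree g \<noteq> 1"
    if "f = g * h" "\<forall>x::rat. poly (map_poly of_int f) x \<noteq> 0" for g h
    using that map_poly_of_int_degree_1_root[of g] by (metis map_poly_of_int_mult mult_zero_left poly_mult)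
  show ?thesis
  proof (intro conjI impI allI)
    assume "content f = 1 \<and> j = m"
    then show "irreducible f"
      using min_degree assms(1,2) by (intro irreducible_primitiveI) fastforce+
  next
    assume *: "content f = 1 \<and> j = m - 1 \<and> (\<forall>x::rat. poly (map_poly of_int f) x \<noteq> 0)"
    show "irreducible f"
    proof (rule irreducible_primitiveI)
      fix g h assume gh: "f = g * h"
      have "min (degree g) (degree h) \<le> 1"
        using min_degree[OF gh] * by simp
      moreover have "degree g \<noteq> 1" "degree h \<noteq> 1"
        using gh * no_linear_factor[of g h] no_linear_factor[of h g] by (auto simp: mult.commute)
      ultimately show "degree g = 0 \<or> degree h = 0"
        by linarith
    qed (use * assms(1,2) in auto)
  qed (use min_degree in auto)
qed

end
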